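(* Assume the setting in the context (in particular the Causal Faithfulness Condition). Let $x_i,x_j,x_k\in X$ be distinct. If $x_k$ is an ancestor of $x_i$ in $G$ and $x_k\perp\!\!\!\perp x_j\mid x_i$, then (1) there is no backdoor path between $x_i$ and $x_j$ in $G$, and (2) $x_j$ is not an ancestor of $x_i$.
   Context: Model: $X$ is a finite set of observed random variables and $U$ a finite set of unobserved random variables; $V=X\cup U$ and $G=(V,E)$ is a DAG on $V$. Each $v_i\in V$ satisfies $v_i=\sum_{x_j\in \mathrm{pa}(v_i)\cap X} f^{(i)}_j(x_j)+\sum_{u_k\in\mathrm{pa}(v_i)\cap U} f^{(i)}_k(u_k)+n_i$, where the $f$'s are nonlinear functions and the external noises $n_i$ are jointly independent. "Parent", "ancestor", "path", "d-separation" refer to $G$ (a path has distinct vertices). Causal Faithfulness Condition (CFC): any conditional independence among variables of $V$ that is not entailed by d-separation in $G$ does not hold. $\perp\!\!\!\perp$ denotes statistical independence. A backdoor path between $x_i$ and $x_j$ is a path in $G$ of the form $x_i\leftarrow\cdots\leftarrow v\to\cdots\to x_j$ for some vertex $v\in V$ (the vertices on it may be observed or unobserved). *)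

theory Defs
  imports "HOL-Probability.Probability"
begin

definition parents :: "('v \<times> 'v) set \<Rightarrow> 'v \<Rightarrow> 'v set" where
  "parents E v = {u. (u, v) \<in> E}"

definition is_dag :: "'v set \<Rightarrow> ('v \<times> 'v) set \<Rightarrow> bool" where
  "is_dag V E \<longleftrightarrow> finite V \<and> E \<subseteq> V \<times> V \<and> acyclic E"

definition ancestor :: "('v \<times> 'v) set \<Rightarrow> 'v \<Rightarrow> 'v \<Rightarrow> bool" where
  "ancestor E a b \<longleftrightarrow> (a, b) \<in> E\<^sup>+"

definition is_path :: "('v \<times> 'v) set \<Rightarrow> 'v list \<Rightarrow> bool" where
  "is_path E p \<longleftrightarrow> p \<noteq> [] \<and> distinct p \<and>
     (\<forall>t. t + 1 < length p \<longrightarrow> (p ! t, p ! (t + 1)) \<in> E \<or> (p ! (t + 1), p ! t) \<in> E)"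

definition path_between :: "('v \<times> 'v) set \<Rightarrow> 'v list \<Rightarrow> 'v \<Rightarrow> 'v \<Rightarrow> bool" where
  "path_between E p a b \<longleftrightarrow> is_path E p \<and> hd p = a \<and> last p = b"

definition collider_at :: "('v \<times> 'v) set \<Rightarrow> 'v list \<Rightarrow> nat \<Rightarrow> bool" where
  "collider_at E p t \<longleftrightarrow> (p ! (t - 1), p ! t) \<in> E \<and> (p ! (t + 1), p ! t) \<in> E"

definition blocked :: "('v \<times> 'v) set \<Rightarrow> 'v list \<Rightarrow> 'v set \<Rightarrow> bool" where
  "blocked E p S \<longleftrightarrow> (\<exists>t. 0 < t \<and> t + 1 < length p \<and>
     ((\<not> collider_at E p t \<and> p ! t \<in> S) \<or>
      (collider_at E p t \<and> \<not> (\<exists>w\<in>S. (p ! t, w) \<in> E\<^sup>*))))"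

definition d_separated :: "('v \<times> 'v) set \<Rightarrow> 'v \<Rightarrow> 'v \<Rightarrow> 'v set \<Rightarrow> bool" where
  "d_separated E a b S \<longleftrightarrow> (\<forall>p. path_between E p a b \<longrightarrow> blocked E p S)"

definition backdoor_path :: "('v \<times> 'v) set \<Rightarrow> 'v list \<Rightarrow> 'v \<Rightarrow> 'v \<Rightarrow> bool" where
  "backdoor_path E p a b \<longleftrightarrow> path_between E p a b \<and>
     (\<exists>m. 0 < m \<and> m + 1 < length p \<and>
        (\<forall>t < m. (p ! (t + 1), p ! t) \<in> E) \<and>
        (\<forall>t. m \<le> t \<and> t + 1 < length p \<longrightarrow> (p ! t, p ! (t + 1)) \<in> E))"

definition gen_sigma :: "'w measure \<Rightarrow> ('v \<Rightarrow> 'w \<Rightarrow> real) \<Rightarrow> 'v set \<Rightarrow> 'w measure" where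
  "gen_sigma M Y S = sigma (space M) {Y v -` B \<inter> space M | v B. v \<in> S \<and> B \<in> sets borel}"

definition cond_indep :: "'w measure \<Rightarrow> ('v \<Rightarrow> 'w \<Rightarrow> real) \<Rightarrow> 'v \<Rightarrow> 'v \<Rightarrow> 'v set \<Rightarrow> bool" where
  "cond_indep M Y a b S \<longleftrightarrow> (\<forall>A\<in>sets borel. \<forall>B\<in>sets borel.
     AE \<omega> in M. real_cond_exp M (gen_sigma M Y S)
                   (\<lambda>\<omega>. indicator A (Y a \<omega>) * indicator B (Y b \<omega>)) \<omega>
               = real_cond_exp M (gen_sigma M Y S) (\<lambda>\<omega>. indicator A (Y a \<omega>)) \<omega>
                 * real_cond_exp M (gen_sigma M Y S) (\<lambda>\<omega>. indicator B (Y b \<omega>)) \<omega>)"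

definition nonlinear :: "(real \<Rightarrow> real) \<Rightarrow> bool" where
  "nonlinear g \<longleftrightarrow> \<not> (\<exists>c d. \<forall>x. g x = c * x + d)"

end

theory Submission
  imports Defs
begin

text \<open>By faithfulness, \<open>x\<^sub>k \<perp> x\<^sub>j | x\<^sub>i\<close> forces \<open>x\<^sub>k\<close> and \<open>x\<^sub>j\<close> to be d-separated by \<open>{x\<^sub>i}\<close>.
  A backdoor path \<open>x\<^sub>i \<leftarrow> \<dots> \<leftarrow> v \<rightarrow> \<dots> \<rightarrow> x\<^sub>j\<close>, and likewise a directed path
  \<open>x\<^sub>j \<rightarrow> \<dots> \<rightarrow> x\<^sub>i\<close> read backwards, can be spliced after a directed path
  \<open>x\<^sub>k \<rightarrow> \<dots> \<rightarrow> x\<^sub>i\<close> at the first vertex of the latter lying on it. The resulting path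
  from \<open>x\<^sub>k\<close> to \<open>x\<^sub>j\<close> has at most one collider, the splice vertex, which is then an ancestor
  of \<open>x\<^sub>i\<close> or \<open>x\<^sub>i\<close> itself, and it meets \<open>x\<^sub>i\<close> only there; so it is not blocked by \<open>{x\<^sub>i}\<close>.\<close>

lemma acyclic_edge_asym: "acyclic E \<Longrightarrow> (a, b) \<in> E \<Longrightarrow> (b, a) \<notin> E"
  by (meson acyclic_def trancl.simps trancl_into_trancl2)

lemma rtrancl_imp_distinct_walk:
  assumes "(a, c) \<in> E\<^sup>*"
  shows "\<exists>xs. xs \<noteq> [] \<and> distinct xs \<and> hd xs = a \<and> last xs = c \<and>
           successively (\<lambda>x y. (x, y) \<in> E) xs"
  using assms
proof (induction rule: converse_rtrancl_induct)
  case base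
  show ?case by (intro exI[of _ "[c]"]) simp
next
  case (step a b)
  then obtain xs where xs: "xs \<noteq> []" "distinct xs" "hd xs = b" "last xs = c"
    "successively (\<lambda>x y. (x, y) \<in> E) xs" by blast
  show ?case
  proof (cases "a \<in> set xs")
    case True
    then obtain us ws where "xs = us @ a # ws" by (meson split_list)
    then show ?thesis
      using xs by (intro exI[of _ "a # ws"]) (auto simp: successively_append_iff)
  next
    case False
    then show ?thesis
      using xs step(1) by (intro exI[of _ "a # xs"]) (auto simp: successively_Cons)
  qed
qed

text \<open>\<open>q\<^sub>0 \<rightarrow> \<dots> \<rightarrow> q\<^sub>i \<leftarrow> \<dots> \<leftarrow> q\<^sub>m \<rightarrow> \<dots> \<rightarrow> q\<^sub>n\<close> when \<open>i \<le> m\<close>;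
  for \<open>i = 0\<close> this is the shape \<open>q\<^sub>0 \<leftarrow> \<dots> \<leftarrow> q\<^sub>m \<rightarrow> \<dots> \<rightarrow> q\<^sub>n\<close> of a backdoor path.\<close>
definition fwd_bwd_fwd :: "('v \<times> 'v) set \<Rightarrow> 'v list \<Rightarrow> nat \<Rightarrow> nat \<Rightarrow> bool" where
  "fwd_bwd_fwd E q i m \<longleftrightarrow> (\<forall>t. t + 1 < length q \<longrightarrow>
     (if t < i \<or> m \<le> t then (q ! t, q ! (t + 1)) \<in> E else (q ! (t + 1), q ! t) \<in> E))"

lemma fwd_bwd_fwd_collider_at_iff:
  assumes acyc: "acyclic E" and q: "fwd_bwd_fwd E q i m"
    and t: "0 < t" "t + 1 < length q"
  shows "collider_at E q t \<longleftrightarrow> t = i \<and> 0 < i \<and> i < m"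
proof
  assume "collider_at E q t"
  then have into: "(q ! (t - 1), q ! t) \<in> E" "(q ! (t + 1), q ! t) \<in> E"
    unfolding collider_at_def by auto
  have "i \<le> t \<and> t < m"
    using q t acyclic_edge_asym[OF acyc into(2)]
    unfolding fwd_bwd_fwd_def by (metis not_le)
  moreover have "\<not> (i \<le> t - 1 \<and> t - 1 < m)"
  proof
    assume "i \<le> t - 1 \<and> t - 1 < m"
    then have "(q ! t, q ! (t - 1)) \<in> E"
      using q t unfolding fwd_bwd_fwd_def by (auto dest!: spec[of _ "t - 1"])
    then show False using acyclic_edge_asym[OF acyc into(1)] by blast
  qed
  ultimately show "t = i \<and> 0 < i \<and> i < m" using t by auto
next
  assume "t = i \<and> 0 < i \<and> i < m"
  then show "collider_at E q t"
    using q t unfolding fwd_bwd_fwd_def collider_at_def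
    by (auto dest: spec[of _ "t - 1"] spec[of _ t])
qed

lemma fwd_bwd_fwd_not_blocked:
  assumes acyc: "acyclic E" and q: "fwd_bwd_fwd E q i m" and "distinct q" "i < length q"
    and on_path: "x \<in> set q \<Longrightarrow> q ! i = x \<and> 0 < i \<and> i < m"
    and reach: "0 < i \<Longrightarrow> i < m \<Longrightarrow> (q ! i, x) \<in> E\<^sup>*"
  shows "\<not> blocked E q {x}"
proof
  assume "blocked E q {x}"
  then obtain t where t: "0 < t" "t + 1 < length q" and
    "(\<not> collider_at E q t \<and> q ! t = x) \<or> (collider_at E q t \<and> (q ! t, x) \<notin> E\<^sup>*)"
    unfolding blocked_def by auto
  moreover have "q ! t = x \<Longrightarrow> t = i \<and> 0 < i \<and> i < m"
    using on_path t \<open>distinct q\<close> \<open>i < length q\<close> nth_eq_iff_index_eq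
    by (metis Suc_eq_plus1 Suc_lessD nth_mem)
  ultimately show False
    using fwd_bwd_fwd_collider_at_iff[OF acyc q t] reach by auto
qed

lemma fwd_bwd_fwd_drop:
  assumes "fwd_bwd_fwd E b 0 m"
  shows "fwd_bwd_fwd E (drop s b) 0 (m - s)"
  unfolding fwd_bwd_fwd_def
proof (intro allI impI)
  fix t assume "t + 1 < length (drop s b)"
  then show "if t < 0 \<or> m - s \<le> t
        then (drop s b ! t, drop s b ! (t + 1)) \<in> E else (drop s b ! (t + 1), drop s b ! t) \<in> E"
    using assms unfolding fwd_bwd_fwd_def
    by (auto dest!: spec[of _ "s + t"] simp: add.assoc split: if_split_asm)
qed

lemma fwd_bwd_fwd_append:
  assumes walk: "successively (\<lambda>x y. (x, y) \<in> E) (xs @ [y])"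
    and ys: "fwd_bwd_fwd E (y # ys) 0 m"
  shows "fwd_bwd_fwd E (xs @ y # ys) (length xs) (length xs + m)"
  unfolding fwd_bwd_fwd_def
proof (intro allI impI)
  fix t assume t: "t + 1 < length (xs @ y # ys)"
  show "if t < length xs \<or> length xs + m \<le> t
        then ((xs @ y # ys) ! t, (xs @ y # ys) ! (t + 1)) \<in> E
        else ((xs @ y # ys) ! (t + 1), (xs @ y # ys) ! t) \<in> E"
  proof (cases "t < length xs")
    case True
    then show ?thesis
      using successively_nth[OF walk, of t] by (auto simp: nth_append less_Suc_eq)
  next
    case False
    define k where "k = t - length xs"
    have "(xs @ y # ys) ! t = (y # ys) ! k" "(xs @ y # ys) ! (t + 1) = (y # ys) ! (k + 1)"
      using False by (auto simp: k_def nth_append Suc_diff_le)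
    moreover have "k + 1 < length (y # ys)" using t False by (simp add: k_def)
    then have "if m \<le> k then ((y # ys) ! k, (y # ys) ! (k + 1)) \<in> E
               else ((y # ys) ! (k + 1), (y # ys) ! k) \<in> E"
      using ys unfolding fwd_bwd_fwd_def by (metis not_less_zero)
    ultimately show ?thesis
      using False by (auto simp: k_def split: if_split_asm)
  qed
qed

lemma fwd_bwd_fwd_rev_walk:
  assumes "successively (\<lambda>x y. (x, y) \<in> E) xs"
  shows "fwd_bwd_fwd E (rev xs) 0 (length xs - 1)"
  unfolding fwd_bwd_fwd_def
proof (intro allI impI)
  fix t assume t: "t + 1 < length (rev xs)"
  then have "(xs ! (length xs - Suc (Suc t)), xs ! Suc (length xs - Suc (Suc t))) \<in> E"
    using successively_nth[OF assms] by simp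
  moreover have "Suc (length xs - Suc (Suc t)) = length xs - Suc t" using t by simp
  ultimately show "if t < 0 \<or> length xs - 1 \<le> t
        then (rev xs ! t, rev xs ! (t + 1)) \<in> E else (rev xs ! (t + 1), rev xs ! t) \<in> E"
    using t by (simp add: rev_nth)
qed

lemma fwd_bwd_fwd_rtrancl_hd:
  assumes b: "fwd_bwd_fwd E b 0 m" and "s \<le> m" "s < length b"
  shows "(b ! s, b ! 0) \<in> E\<^sup>*"
  using assms(2,3)
proof (induction s)
  case (Suc s)
  then have "(b ! Suc s, b ! s) \<in> E"
    using b unfolding fwd_bwd_fwd_def by auto
  then show ?case using Suc by (meson Suc_leD Suc_lessD converse_rtrancl_into_rtrancl)
qed simp

lemma fwd_bwd_fwd_is_path:
  assumes "fwd_bwd_fwd E q i m" "q \<noteq> []" "distinct q"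
  shows "is_path E q"
  unfolding is_path_def
proof (intro conjI allI impI assms(2,3))
  fix t assume "t + 1 < length q"
  then show "(q ! t, q ! (t + 1)) \<in> E \<or> (q ! (t + 1), q ! t) \<in> E"
    using spec[OF assms(1)[unfolded fwd_bwd_fwd_def], of t] by (auto split: if_split_asm)
qed

lemma backdoor_path_fwd_bwd_fwd:
  assumes "backdoor_path E p a b"
  obtains m where "path_between E p a b" "0 < m" "fwd_bwd_fwd E p 0 m"
  using assms unfolding backdoor_path_def fwd_bwd_fwd_def by (auto simp: not_le)

lemma ancestor_fwd_bwd_fwd_not_d_separated:
  assumes acyc: "acyclic E" and anc: "ancestor E xk xi" and "xk \<noteq> xi"
    and b_path: "path_between E b xi xj" and "0 < m" and b_shape: "fwd_bwd_fwd E b 0 m"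
  shows "\<not> d_separated E xk xj {xi}"
proof -
  have b: "b \<noteq> []" "distinct b" "hd b = xi" "last b = xj"
    using b_path unfolding path_between_def is_path_def by auto
  obtain P where P: "P \<noteq> []" "distinct P" "hd P = xk" "last P = xi"
    "successively (\<lambda>x y. (x, y) \<in> E) P"
    using rtrancl_imp_distinct_walk[of xk xi E] anc unfolding ancestor_def
    by (meson trancl_into_rtrancl)
  have "\<exists>x\<in>set P. x \<in> set b" using last_in_set[OF P(1)] hd_in_set[OF b(1)] P(4) b(3) by auto
  then obtain ys x zs where P_split: "P = ys @ x # zs" "x \<in> set b" "\<forall>y\<in>set ys. y \<notin> set b"
    by (rule split_list_first_propE)
  obtain us ws where b_split: "b = us @ x # ws" using split_list[OF P_split(2)] by blast
  define q where "q = ys @ x # ws"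
  define i where "i = length ys"
  define m' where "m' = i + (m - length us)"
  have "successively (\<lambda>x y. (x, y) \<in> E) (ys @ [x])"
    using P(5) unfolding P_split by (simp add: successively_append_iff)
  moreover have "fwd_bwd_fwd E (x # ws) 0 (m - length us)"
    using fwd_bwd_fwd_drop[OF b_shape, of "length us"] b_split by simp
  ultimately have q_shape: "fwd_bwd_fwd E q i m'"
    unfolding q_def i_def m'_def by (rule fwd_bwd_fwd_append)
  have q_dist: "distinct q" using P(2) b(2) P_split b_split by (auto simp: q_def)
  have on_path: "q ! i = xi \<and> 0 < i \<and> i < m'" if "xi \<in> set q"
  proof -
    have "xi \<in> set b" "xi \<notin> set ys" using b P_split(3) by auto
    then have "x = xi" using that b(2,3) b_split by (cases us) (auto simp: q_def)
    moreover from this have "us = []" using b(2,3) b_split by (cases us) auto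
    moreover have "ys \<noteq> []" using P(3) \<open>xk \<noteq> xi\<close> \<open>x = xi\<close> P_split(1) by auto
    ultimately show ?thesis using \<open>0 < m\<close> by (simp add: q_def i_def m'_def)
  qed
  have reach: "(q ! i, xi) \<in> E\<^sup>*" if "i < m'"
  proof -
    have "q ! i = b ! length us" "b ! 0 = xi"
      using b(1,3) b_split by (auto simp: q_def i_def hd_conv_nth nth_append)
    then show ?thesis
      using fwd_bwd_fwd_rtrancl_hd[OF b_shape, of "length us"] that b_split by (simp add: m'_def)
  qed
  have "\<not> blocked E q {xi}"
    using fwd_bwd_fwd_not_blocked[OF acyc q_shape q_dist _ on_path reach] by (simp add: q_def i_def)
  moreover have "path_between E q xk xj"
    using fwd_bwd_fwd_is_path[OF q_shape _ q_dist] P(3) b(4) P_split(1) b_split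
    unfolding path_between_def by (cases ys) (auto simp: q_def)
  ultimately show ?thesis unfolding d_separated_def by blast
qed

theorem lemma8:
  fixes X U :: "'v set" and E :: "('v \<times> 'v) set"
    and M :: "'w measure"
    and val :: "'v \<Rightarrow> 'w \<Rightarrow> real"
    and noise :: "'v \<Rightarrow> 'w \<Rightarrow> real"
    and f :: "'v \<Rightarrow> 'v \<Rightarrow> real \<Rightarrow> real"
    and xi xj xk :: 'v
  assumes fin: "finite X" "finite U" and disj: "X \<inter> U = {}"
    and dag: "is_dag (X \<union> U) E"
    and prob: "prob_space M"
    and noise_rv: "\<And>v. v \<in> X \<union> U \<Longrightarrow> noise v \<in> borel_measurable M"
    and noise_indep: "prob_space.indep_vars M (\<lambda>_. borel) noise (X \<union> U)"
    and f_meas: "\<And>v u. v \<in> X \<union> U \<Longrightarrow> u \<in> parents E v \<Longrightarrow> f v u \<in> borel_measurable borel"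
    and f_nonlin: "\<And>v u. v \<in> X \<union> U \<Longrightarrow> u \<in> parents E v \<Longrightarrow> nonlinear (f v u)"
    and sem: "\<And>v \<omega>. v \<in> X \<union> U \<Longrightarrow> \<omega> \<in> space M \<Longrightarrow>
        val v \<omega> = (\<Sum>u \<in> parents E v \<inter> X. f v u (val u \<omega>))
                  + (\<Sum>u \<in> parents E v \<inter> U. f v u (val u \<omega>)) + noise v \<omega>"
    and CFC: "\<And>a b S. a \<in> X \<union> U \<Longrightarrow> b \<in> X \<union> U \<Longrightarrow> S \<subseteq> X \<union> U \<Longrightarrow>
        a \<noteq> b \<Longrightarrow> a \<notin> S \<Longrightarrow> b \<notin> S \<Longrightarrow>
        cond_indep M val a b S \<Longrightarrow> d_separated E a b S"
    and obs: "xi \<in> X" "xj \<in> X" "xk \<in> X"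
    and dist: "xi \<noteq> xj" "xi \<noteq> xk" "xj \<noteq> xk"
    and anc: "ancestor E xk xi"
    and ci: "cond_indep M val xk xj {xi}"
  shows "(\<not> (\<exists>p. backdoor_path E p xi xj)) \<and> \<not> ancestor E xj xi"
proof -
  have acyc: "acyclic E" using dag by (simp add: is_dag_def)
  have dsep: "d_separated E xk xj {xi}" using CFC[of xk xj "{xi}"] obs dist ci by auto
  have not_dsep: "\<not> d_separated E xk xj {xi}"
    if "path_between E b xi xj" "0 < m" "fwd_bwd_fwd E b 0 m" for b m
    using ancestor_fwd_bwd_fwd_not_d_separated[OF acyc anc _ that] dist by auto
  have "\<not> backdoor_path E p xi xj" for p
    using backdoor_path_fwd_bwd_fwd not_dsep dsep by metis
  moreover have "\<not> ancestor E xj xi"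
  proof
    assume "ancestor E xj xi"
    then obtain D where D: "D \<noteq> []" "distinct D" "hd D = xj" "last D = xi"
      "successively (\<lambda>x y. (x, y) \<in> E) D"
      using rtrancl_imp_distinct_walk[of xj xi E] unfolding ancestor_def
      by (meson trancl_into_rtrancl)
    have D_shape: "fwd_bwd_fwd E (rev D) 0 (length D - 1)"
      using fwd_bwd_fwd_rev_walk[OF D(5)] .
    have "length D \<noteq> 1" using D dist by (auto simp: length_Suc_conv)
    then have "0 < length D - 1" using D(1) by (cases D) auto
    moreover have "path_between E (rev D) xi xj"
      using fwd_bwd_fwd_is_path[OF D_shape] D by (simp add: path_between_def hd_rev last_rev)
    ultimately show False using not_dsep D_shape dsep by blast
  qed
  ultimately show ?thesis by blast
qed

end
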